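(* Let $k\ge2$ and $n\ge k$ be integers, let $\beta=\sum_{i=1}^n i^{k-1}$ and $c_i=i^{k-1}/\beta$ for $i=1,\dots,n$. In the position-randomized auction setting described in the context, suppose all $k-1$ disadvantaged bidders use the initial bid sequence $c_1,\dots,c_n$ and the uniform distribution on permutations. Then for every position-randomized strategy of the adversary ${\mathcal A}$, each disadvantaged bidder wins at least $\frac{1}{k-1}\left(n-\frac{\beta-1}{n^{k-1}}\right)$ objects in expectation. Moreover this is optimal: for every initial bid sequence and every permutation distribution used in common by the disadvantaged bidders, ${\mathcal A}$ has a position-randomized strategy under which each disadvantaged bidder wins at most $\frac{1}{k-1}\left(n-\frac{\beta-1}{n^{k-1}}\right)$ objects in expectation.
   Context: Auction model: there are $k$ bidders, one adversary ${\mathcal A}$ and $k-1$ disadvantaged bidders, and $n$ objects auctioned simultaneously. Each object is won by the highest bidder on it, paying his bid; if $m$ bidders tie for the highest bid, each wins with probability $1/m$. All bidders are restricted to position-randomized bidding algorithms: a bidder chooses an initial sequence $x_1,\dots,x_n$ of positive reals with $\sum x_j\le 1$ (the budget) and a probability distribution on permutations $\sigma$ of $\{1,\dots,n\}$; he draws $\sigma$ from that distribution and bids $x_j$ on object $\sigma(j)$. All disadvantaged bidders use the same initial sequence and the same permutation distribution, each drawing his permutation independently; ${\mathcal A}$ knows their algorithm, and his permutation is drawn independently of theirs. Expected numbers of won objects are over all this randomness. *)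

theory Defs
  imports "HOL-Combinatorics.Permutations" Complex_Main
begin

text \<open>Objects are indexed by 0..n-1; position j (0-based) of an initial
  sequence corresponds to the paper's position j+1.\<close>

definition perms :: "nat \<Rightarrow> (nat \<Rightarrow> nat) set" where
  "perms n = {\<sigma>. \<sigma> permutes {..<n}}"

definition bidseq :: "nat \<Rightarrow> (nat \<Rightarrow> real) \<Rightarrow> bool" where
  "bidseq n x \<longleftrightarrow> (\<forall>j<n. 0 < x j) \<and> (\<Sum>j<n. x j) \<le> 1"

definition permdist :: "nat \<Rightarrow> ((nat \<Rightarrow> nat) \<Rightarrow> real) \<Rightarrow> bool" where
  "permdist n p \<longleftrightarrow> (\<forall>\<sigma>\<in>perms n. 0 \<le> p \<sigma>) \<and> (\<Sum>\<sigma>\<in>perms n. p \<sigma>) = 1"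

definition unif_perm :: "nat \<Rightarrow> (nat \<Rightarrow> nat) \<Rightarrow> real" where
  "unif_perm n \<sigma> = 1 / real (fact n)"

text \<open>Bid placed on object ob when x_j is bid on object \<sigma>(j).\<close>
definition bid :: "(nat \<Rightarrow> real) \<Rightarrow> (nat \<Rightarrow> nat) \<Rightarrow> nat \<Rightarrow> real" where
  "bid x \<sigma> ob = x (inv \<sigma> ob)"

definition share :: "(nat \<Rightarrow> real) \<Rightarrow> nat \<Rightarrow> nat \<Rightarrow> real" where
  "share bs m d = (if bs d = Max (bs ` {..<m})
      then 1 / real (card {j\<in>{..<m}. bs j = bs d}) else 0)"

text \<open>Expected number of objects won by disadvantaged bidder d (1 \<le> d \<le> k-1).
  Bidder 0 is the adversary using (y,q); bidders 1..k-1 use (x,p), independently.\<close>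
definition expected_win ::
  "nat \<Rightarrow> nat \<Rightarrow> (nat \<Rightarrow> real) \<Rightarrow> ((nat \<Rightarrow> nat) \<Rightarrow> real)
     \<Rightarrow> (nat \<Rightarrow> real) \<Rightarrow> ((nat \<Rightarrow> nat) \<Rightarrow> real) \<Rightarrow> nat \<Rightarrow> real" where
  "expected_win n k x p y q d =
     (\<Sum>\<tau>\<in>perms n. \<Sum>ss\<in>PiE {1..k-1} (\<lambda>_. perms n).
        q \<tau> * (\<Prod>i\<in>{1..k-1}. p (ss i)) *
        (\<Sum>ob<n. share (\<lambda>i. if i = 0 then bid y \<tau> ob else bid x (ss i) ob) k d))"

end

theory Submission
  imports Defs "HOL-Analysis.Convex"
begin

(* Each object is won by somebody and the k - 1 disadvantaged bidders are exchangeable, so each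
   of them wins (n - E) / (k - 1) objects in expectation, where E is the expected number of
   objects won by the adversary; both claims are therefore bounds on E.

   Against the bids c_i = i^(k-1) / beta in uniformly random positions, an adversary bidding a on
   an object wins it with probability at most the mean of (U/n)^(k-1) and (L/n)^(k-1), where U and
   L count the c_i that are <= a and < a. Now U^(k-1) <= beta a, and if this is an equality then
   L = U - 1, so the mean of U^(k-1) and L^(k-1) is at most U^(k-1) - 1/2; as beta is an integer
   and the adversary's bids sum to at most 1, this gives E <= (beta - 1) / n^(k-1).

   Conversely, against any (x, p) the adversary bids slightly more than x_j at each position j
   except a cheapest one j0, which pays for the increments, in uniformly random positions. He
   wins an object whenever all opponents bid at most his x_j there; by the power mean inequality
   these probabilities, summed over the objects, are at least N_j^(k-1) / n^(k-2), where
   N_j = #{i. x_i <= x_j} exceeds the rank of x_j among the positions other than j0. Summing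
   over j <> j0 gives E >= (2^(k-1) + ... + n^(k-1)) / n^(k-1) = (beta - 1) / n^(k-1). *)

section \<open>Random permutations\<close>

lemma finite_perms: "finite (perms n)"
  unfolding perms_def by (rule finite_permutations) simp

lemma card_perms: "card (perms n) = fact n"
  unfolding perms_def by (rule card_permutations) simp_all

lemma sum_bid_permutes:
  assumes "\<sigma> permutes {..<n}"
  shows "(\<Sum>ob<n. h (bid x \<sigma> ob)) = (\<Sum>j<n. h (x j))"
  unfolding bid_def using sum.permute[OF permutes_inv[OF assms], of "\<lambda>j. h (x j)"] by simp

lemma sum_perms_apply_eq:
  assumes "a < n" "b < n"
  shows "(\<Sum>\<sigma>\<in>perms n. g (\<sigma> a)) = (\<Sum>\<sigma>\<in>perms n. g (\<sigma> b))"
proof -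
  have t: "transpose a b permutes {..<n}"
    using assms by (intro permutes_swap_id) auto
  have "bij_betw (\<lambda>\<sigma>. \<sigma> \<circ> transpose a b) (perms n) (perms n)"
    by (rule bij_betw_byWitness[where f'="\<lambda>\<sigma>. \<sigma> \<circ> transpose a b"])
       (auto simp: perms_def o_assoc[symmetric] permutes_compose[OF t])
  from sum.reindex_bij_betw[OF this, of "\<lambda>\<sigma>. g (\<sigma> a)"] show ?thesis
    by simp
qed

lemma sum_unif_perm_bid:
  fixes h :: "real \<Rightarrow> real"
  assumes "ob < n"
  shows "(\<Sum>\<sigma>\<in>perms n. unif_perm n \<sigma> * h (bid x \<sigma> ob)) = (\<Sum>j<n. h (x j)) / real n"
proof -
  let ?g = "\<lambda>j. h (x j)"
  have "bij_betw inv (perms n) (perms n)"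
    by (rule bij_betw_byWitness[where f'=inv]) (auto simp: perms_def permutes_inv_inv permutes_inv)
  then have "(\<Sum>\<sigma>\<in>perms n. h (bid x \<sigma> ob)) = (\<Sum>\<sigma>\<in>perms n. ?g (\<sigma> ob))"
    unfolding bid_def using sum.reindex_bij_betw[of inv "perms n" "perms n" "\<lambda>\<sigma>. ?g (\<sigma> ob)"]
    by simp
  also have "real n * \<dots> = (\<Sum>b<n. \<Sum>\<sigma>\<in>perms n. ?g (\<sigma> b))"
    using sum_perms_apply_eq[OF _ assms, of _ ?g] by simp
  also have "\<dots> = (\<Sum>\<sigma>\<in>perms n. \<Sum>b<n. ?g (\<sigma> b))"
    by (rule sum.swap)
  also have "\<dots> = (\<Sum>\<sigma>\<in>perms n. \<Sum>j<n. ?g j)"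
    by (rule sum.cong[OF refl]) (use sum.permute[of _ "{..<n}" ?g] in \<open>auto simp: perms_def\<close>)
  also have "\<dots> = fact n * (\<Sum>j<n. ?g j)"
    by (simp add: card_perms)
  finally show ?thesis
    using assms by (simp add: unif_perm_def field_simps sum_divide_distrib[symmetric])
qed

lemma sum_bid_permdist:
  fixes h :: "real \<Rightarrow> real"
  assumes "permdist n p"
  shows "(\<Sum>ob<n. \<Sum>\<sigma>\<in>perms n. p \<sigma> * h (bid x \<sigma> ob)) = (\<Sum>j<n. h (x j))"
proof -
  have "(\<Sum>ob<n. \<Sum>\<sigma>\<in>perms n. p \<sigma> * h (bid x \<sigma> ob))
      = (\<Sum>\<sigma>\<in>perms n. p \<sigma> * (\<Sum>ob<n. h (bid x \<sigma> ob)))"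
    by (simp add: sum_distrib_left sum.swap[of _ "{..<n}"])
  also have "\<dots> = (\<Sum>\<sigma>\<in>perms n. p \<sigma>) * (\<Sum>j<n. h (x j))"
    by (simp add: perms_def sum_bid_permutes sum_distrib_right)
  finally show ?thesis
    using assms by (simp add: permdist_def)
qed

lemma sum_PiE_prod_of_bool_all:
  fixes p :: "'a \<Rightarrow> real"
  assumes "finite I" "finite A"
  shows "(\<Sum>ss\<in>PiE I (\<lambda>_. A). (\<Prod>i\<in>I. p (ss i)) * of_bool (\<forall>i\<in>I. R (ss i)))
       = (\<Sum>\<sigma>\<in>A. p \<sigma> * of_bool (R \<sigma>)) ^ card I"
proof -
  have "\<And>ss. (\<Prod>i\<in>I. of_bool (R (ss i)) :: real) = of_bool (\<forall>i\<in>I. R (ss i))"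
    using assms(1) by (induction I rule: finite_induct) auto
  then have "(\<Sum>ss\<in>PiE I (\<lambda>_. A). (\<Prod>i\<in>I. p (ss i)) * of_bool (\<forall>i\<in>I. R (ss i)))
      = (\<Sum>ss\<in>PiE I (\<lambda>_. A). \<Prod>i\<in>I. p (ss i) * of_bool (R (ss i)))"
    by (simp add: prod.distrib)
  also have "\<dots> = (\<Prod>i\<in>I. \<Sum>\<sigma>\<in>A. p \<sigma> * of_bool (R \<sigma>))"
    by (rule prod_sum_PiE[symmetric]) (use assms in auto)
  finally show ?thesis
    by simp
qed

section \<open>Tie-breaking shares\<close>

lemma share_nonneg: "0 \<le> share bs m d"
  unfolding share_def by simp

lemma sum_share:
  assumes "0 < m"
  shows "(\<Sum>d<m. share bs m d) = 1"
proof -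
  let ?W = "{j\<in>{..<m}. bs j = Max (bs ` {..<m})}"
  have "Max (bs ` {..<m}) \<in> bs ` {..<m}"
    using assms by (intro Max_in) auto
  then have "?W \<noteq> {}"
    by auto
  have "(\<Sum>d<m. share bs m d) = (\<Sum>d\<in>?W. 1 / real (card ?W))"
    unfolding share_def by (simp add: sum.If_cases Int_def conj_commute)
  then show ?thesis
    using \<open>?W \<noteq> {}\<close> by simp
qed

lemma share_permute:
  assumes "s permutes {..<m}" "d < m"
  shows "share (\<lambda>i. bs (s i)) m d = share bs m (s d)"
proof -
  have "(\<lambda>i. bs (s i)) ` {..<m} = bs ` {..<m}"
    using permutes_image[OF assms(1)] by (metis image_image)
  moreover have "card {j\<in>{..<m}. bs (s j) = v} = card {j\<in>{..<m}. bs j = v}" for v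
  proof -
    have "(\<Sum>j<m. of_bool (bs (s j) = v)) = (\<Sum>j<m. of_bool (bs j = v) :: real)"
      using sum.permute[OF assms(1), of "\<lambda>j. of_bool (bs j = v)"] unfolding comp_def by (rule sym)
    then show ?thesis
      by (simp add: Int_def conj_commute)
  qed
  ultimately show ?thesis
    unfolding share_def by simp
qed

lemma share_0_eq_1:
  assumes "0 < m" "\<forall>i\<in>{1..m-1}. bs i < bs 0"
  shows "share bs m 0 = 1"
proof -
  have others: "bs j < bs 0" if "j < m" "j \<noteq> 0" for j
    using assms(2) that by auto
  have "Max (bs ` {..<m}) = bs 0"
    using assms(1) others by (intro Max_eqI) (auto simp: le_less)
  moreover have "{j\<in>{..<m}. bs j = bs 0} = {0}"
    using assms(1) others by force
  ultimately show ?thesis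
    unfolding share_def by simp
qed

lemma share_0_le:
  assumes "0 < m"
  shows "share bs m 0
    \<le> (of_bool (\<forall>i\<in>{1..m-1}. bs i \<le> bs 0) + of_bool (\<forall>i\<in>{1..m-1}. bs i < bs 0)) / 2"
proof (cases "\<forall>i\<in>{1..m-1}. bs i \<le> bs 0")
  case False
  then obtain i where i: "i \<in> {1..m-1}" "\<not> bs i \<le> bs 0"
    by blast
  then have "bs 0 \<noteq> Max (bs ` {..<m})"
    using assms Max_ge[of "bs ` {..<m}" "bs i"] by force
  then show ?thesis
    using False unfolding share_def by simp
next
  case le: True
  show ?thesis
  proof (cases "\<forall>i\<in>{1..m-1}. bs i < bs 0")
    case True
    then show ?thesis
      using share_0_eq_1[OF assms] le by simp
  next
    case False
    then obtain i where i: "i \<in> {1..m-1}" "bs i = bs 0"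
      using le by force
    have "card {0, i} \<le> card {j\<in>{..<m}. bs j = bs 0}"
      using i assms by (intro card_mono) auto
    then have "share bs m 0 \<le> 1 / 2"
      using i unfolding share_def by (auto simp: field_simps)
    then show ?thesis
      using le False by simp
  qed
qed

section \<open>Reduction to the adversary's expected win\<close>

lemma unif_permdist: "permdist n (unif_perm n)"
  unfolding permdist_def unif_perm_def by (simp add: card_perms)

lemma sum_PiE_prod_permdist:
  assumes "permdist n p" "finite I"
  shows "(\<Sum>ss\<in>PiE I (\<lambda>_. perms n). \<Prod>i\<in>I. p (ss i)) = 1"
  using sum_PiE_prod_of_bool_all[OF assms(2) finite_perms, of p "\<lambda>_. True"] assms(1)
  by (simp add: permdist_def)

lemma sum_expected_win:
  assumes "0 < k" "permdist n p" "permdist n q"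
  shows "(\<Sum>d<k. expected_win n k x p y q d) = real n"
proof -
  let ?SS = "PiE {1..k-1} (\<lambda>_. perms n)"
  let ?bs = "\<lambda>\<tau> ss ob i. if i = 0 then bid y \<tau> ob else bid x (ss i) ob"
  let ?w = "\<lambda>\<tau> ss. q \<tau> * (\<Prod>i\<in>{1..k-1}. p (ss i))"
  have "(\<Sum>d<k. expected_win n k x p y q d)
      = (\<Sum>\<tau>\<in>perms n. \<Sum>ss\<in>?SS. ?w \<tau> ss * (\<Sum>ob<n. \<Sum>d<k. share (?bs \<tau> ss ob) k d))"
  proof -
    have "(\<Sum>d<k. expected_win n k x p y q d)
        = (\<Sum>\<tau>\<in>perms n. \<Sum>d<k. \<Sum>ss\<in>?SS. ?w \<tau> ss * (\<Sum>ob<n. share (?bs \<tau> ss ob) k d))"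
      unfolding expected_win_def by (rule sum.swap)
    also have "\<dots> = (\<Sum>\<tau>\<in>perms n. \<Sum>ss\<in>?SS. \<Sum>d<k. ?w \<tau> ss * (\<Sum>ob<n. share (?bs \<tau> ss ob) k d))"
      by (intro sum.cong refl sum.swap)
    finally show ?thesis
      by (simp add: sum_distrib_left sum.swap[of _ "{..<k}" "{..<n}"])
  qed
  also have "\<dots> = (\<Sum>\<tau>\<in>perms n. \<Sum>ss\<in>?SS. ?w \<tau> ss) * real n"
    using assms(1) by (simp add: sum_share sum_distrib_right)
  also have "(\<Sum>\<tau>\<in>perms n. \<Sum>ss\<in>?SS. ?w \<tau> ss) = 1"
    using assms(2,3) by (simp add: sum_distrib_left[symmetric] sum_distrib_right[symmetric]
        sum_PiE_prod_permdist permdist_def)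
  finally show ?thesis
    by simp
qed

lemma expected_win_disadvantaged_eq:
  assumes "d \<in> {1..k-1}" "d' \<in> {1..k-1}"
  shows "expected_win n k x p y q d = expected_win n k x p y q d'"
proof -
  let ?SS = "PiE {1..k-1} (\<lambda>_. perms n)"
  let ?bs = "\<lambda>\<tau> ss ob i. if i = 0 then bid y \<tau> ob else bid x (ss i) ob"
  define s where "s = transpose d d'"
  have s_I: "s permutes {1..k-1}" and s_k: "s permutes {..<k}"
    unfolding s_def using assms by (auto intro: permutes_swap_id)
  have "ss \<circ> s \<in> ?SS" if "ss \<in> ?SS" for ss
    using that permutes_in_image[OF s_I] permutes_not_in[OF s_I] by (auto simp: PiE_iff extensional_def)
  moreover have "(ss \<circ> s) \<circ> s = ss" for ss :: "nat \<Rightarrow> nat \<Rightarrow> nat"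
    by (simp add: s_def comp_assoc)
  ultimately have bij: "bij_betw (\<lambda>ss. ss \<circ> s) ?SS ?SS"
    by (intro bij_betw_byWitness[where f'="\<lambda>ss. ss \<circ> s"]) auto
  have share_eq: "share (?bs \<tau> (ss \<circ> s) ob) k d = share (?bs \<tau> ss ob) k d'" for \<tau> ss ob
  proof -
    have "?bs \<tau> (ss \<circ> s) ob = (\<lambda>i. ?bs \<tau> ss ob (s i))"
      using assms by (auto simp: s_def transpose_def fun_eq_iff)
    moreover have "d < k" "s d = d'"
      using assms by (auto simp: s_def)
    ultimately show ?thesis
      using share_permute[OF s_k, of d "?bs \<tau> ss ob"] by simp
  qed
  have prod_eq: "(\<Prod>i\<in>{1..k-1}. p ((ss \<circ> s) i)) = (\<Prod>i\<in>{1..k-1}. p (ss i))" for ss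
    using prod.permute[OF s_I, of "\<lambda>i. p (ss i)"] by (simp add: comp_def)
  let ?F = "\<lambda>\<tau> e ss. q \<tau> * (\<Prod>i\<in>{1..k-1}. p (ss i)) * (\<Sum>ob<n. share (?bs \<tau> ss ob) k e)"
  have "sum (?F \<tau> d) ?SS = sum (?F \<tau> d') ?SS" for \<tau>
  proof -
    have "sum (?F \<tau> d) ?SS = (\<Sum>ss\<in>?SS. ?F \<tau> d (ss \<circ> s))"
      by (rule sum.reindex_bij_betw[OF bij, symmetric])
    also have "\<dots> = sum (?F \<tau> d') ?SS"
      by (simp only: share_eq prod_eq)
    finally show ?thesis .
  qed
  then show ?thesis
    unfolding expected_win_def by simp
qed

lemma expected_win_eq_adversary:
  assumes "2 \<le> k" "permdist n p" "permdist n q" "d \<in> {1..k-1}"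
  shows "expected_win n k x p y q d = (real n - expected_win n k x p y q 0) / real (k - 1)"
proof -
  have "{..<k} = insert 0 {1..k-1}"
    using assms(1) by auto
  then have "real n = expected_win n k x p y q 0 + (\<Sum>d'\<in>{1..k-1}. expected_win n k x p y q d')"
    using sum_expected_win[OF _ assms(2,3), of k x y] assms(1) by simp
  also have "(\<Sum>d'\<in>{1..k-1}. expected_win n k x p y q d') = real (k - 1) * expected_win n k x p y q d"
    using expected_win_disadvantaged_eq[OF _ assms(4)] by simp
  finally show ?thesis
    using assms(1) by (simp add: field_simps)
qed

section \<open>The adversary's share of a single object\<close>

definition adversary_share ::
  "nat \<Rightarrow> nat \<Rightarrow> (nat \<Rightarrow> real) \<Rightarrow> ((nat \<Rightarrow> nat) \<Rightarrow> real) \<Rightarrow> real \<Rightarrow> nat \<Rightarrow> real" where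
  "adversary_share n k x p a ob =
     (\<Sum>ss\<in>PiE {1..k-1} (\<lambda>_. perms n). (\<Prod>i\<in>{1..k-1}. p (ss i)) *
        share (\<lambda>i. if i = 0 then a else bid x (ss i) ob) k 0)"

lemma expected_win_0_eq:
  "expected_win n k x p y q 0
     = (\<Sum>\<tau>\<in>perms n. q \<tau> * (\<Sum>ob<n. adversary_share n k x p (bid y \<tau> ob) ob))"
  unfolding expected_win_def adversary_share_def
  by (simp add: sum_distrib_left mult.assoc sum.swap[of _ "{..<n}"])

lemma adversary_share_unif_le:
  assumes "0 < k" "ob < n"
  shows "adversary_share n k x (unif_perm n) a ob
    \<le> ((real (card ({..<n} \<inter> {i. x i \<le> a})) / n) ^ (k - 1)
        + (real (card ({..<n} \<inter> {i. x i < a})) / n) ^ (k - 1)) / 2"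
proof -
  let ?SS = "PiE {1..k-1} (\<lambda>_. perms n)"
  let ?w = "\<lambda>ss. \<Prod>i\<in>{1..k-1}. unif_perm n (ss i)"
  let ?all = "\<lambda>R ss. of_bool (\<forall>i\<in>{1..k-1}. R (bid x (ss i) ob)) :: real"
  have marginal: "(\<Sum>\<sigma>\<in>perms n. unif_perm n \<sigma> * of_bool (R (bid x \<sigma> ob)))
      = real (card ({..<n} \<inter> {i. R (x i)})) / n" for R
    using sum_unif_perm_bid[OF assms(2), of "\<lambda>v. of_bool (R v)"] by simp
  have independent_bids:
    "(\<Sum>ss\<in>?SS. ?w ss * ?all R ss) = (real (card ({..<n} \<inter> {i. R (x i)})) / n) ^ (k - 1)" for R
    using sum_PiE_prod_of_bool_all[where I="{1..k-1}" and A="perms n" and p="unif_perm n"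
        and R="\<lambda>\<sigma>. R (bid x \<sigma> ob)"] marginal[of R]
    by (simp only: finite_perms finite_atLeastAtMost card_atLeastAtMost diff_Suc_1)
  have "adversary_share n k x (unif_perm n) a ob
      \<le> (\<Sum>ss\<in>?SS. ?w ss * ((?all (\<lambda>v. v \<le> a) ss + ?all (\<lambda>v. v < a) ss) / 2))"
    unfolding adversary_share_def
  proof (intro sum_mono mult_left_mono)
    fix ss
    show "share (\<lambda>i. if i = 0 then a else bid x (ss i) ob) k 0
        \<le> (?all (\<lambda>v. v \<le> a) ss + ?all (\<lambda>v. v < a) ss) / 2"
      using share_0_le[OF assms(1), of "\<lambda>i. if i = 0 then a else bid x (ss i) ob"] by simp
    show "0 \<le> ?w ss"
      by (simp add: unif_perm_def)
  qed
  also have "\<dots> = ((\<Sum>ss\<in>?SS. ?w ss * ?all (\<lambda>v. v \<le> a) ss)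
      + (\<Sum>ss\<in>?SS. ?w ss * ?all (\<lambda>v. v < a) ss)) / 2"
    by (simp only: distrib_left sum.distrib times_divide_eq_right sum_divide_distrib add_divide_distrib)
  also have "\<dots> = ((real (card ({..<n} \<inter> {i. x i \<le> a})) / n) ^ (k - 1)
        + (real (card ({..<n} \<inter> {i. x i < a})) / n) ^ (k - 1)) / 2"
    by (simp only: independent_bids[of "\<lambda>v. v \<le> a"] independent_bids[of "\<lambda>v. v < a"])
  finally show ?thesis .
qed

lemma adversary_share_ge:
  assumes "0 < k" "permdist n p"
  shows "(\<Sum>\<sigma>\<in>perms n. p \<sigma> * of_bool (bid x \<sigma> ob < a)) ^ (k - 1) \<le> adversary_share n k x p a ob"
proof -
  let ?SS = "PiE {1..k-1} (\<lambda>_. perms n)"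
  let ?w = "\<lambda>ss. \<Prod>i\<in>{1..k-1}. p (ss i)"
  have "(\<Sum>\<sigma>\<in>perms n. p \<sigma> * of_bool (bid x \<sigma> ob < a)) ^ (k - 1)
      = (\<Sum>ss\<in>?SS. ?w ss * of_bool (\<forall>i\<in>{1..k-1}. bid x (ss i) ob < a))"
    using sum_PiE_prod_of_bool_all[where I="{1..k-1}" and A="perms n" and p=p
        and R="\<lambda>\<sigma>. bid x \<sigma> ob < a"]
    by (simp only: finite_perms finite_atLeastAtMost card_atLeastAtMost diff_Suc_1)
  also have "\<dots> \<le> adversary_share n k x p a ob"
    unfolding adversary_share_def
  proof (intro sum_mono mult_left_mono)
    fix ss assume "ss \<in> ?SS"
    then show "0 \<le> ?w ss"
      using assms(2) by (intro prod_nonneg) (auto simp: permdist_def)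
    show "of_bool (\<forall>i\<in>{1..k-1}. bid x (ss i) ob < a)
        \<le> share (\<lambda>i. if i = 0 then a else bid x (ss i) ob) k 0"
      using share_0_eq_1[OF assms(1)] share_nonneg by simp
  qed
  finally show ?thesis .
qed

lemma adversary_share_nonneg:
  assumes "permdist n p"
  shows "0 \<le> adversary_share n k x p a ob"
  unfolding adversary_share_def using assms
  by (intro sum_nonneg mult_nonneg_nonneg prod_nonneg share_nonneg) (auto simp: permdist_def)

lemma adversary_share_overbid_ge:
  assumes "0 < k" "permdist n p" "v < a"
  shows "(\<Sum>\<sigma>\<in>perms n. p \<sigma> * of_bool (bid x \<sigma> ob \<le> v)) ^ (k - 1) \<le> adversary_share n k x p a ob"
proof -
  have "(\<Sum>\<sigma>\<in>perms n. p \<sigma> * of_bool (bid x \<sigma> ob \<le> v))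
      \<le> (\<Sum>\<sigma>\<in>perms n. p \<sigma> * of_bool (bid x \<sigma> ob < a))"
    using assms(2,3) by (intro sum_mono mult_left_mono) (auto simp: permdist_def)
  moreover have "0 \<le> (\<Sum>\<sigma>\<in>perms n. p \<sigma> * of_bool (bid x \<sigma> ob \<le> v))"
    using assms(2) by (intro sum_nonneg) (simp add: permdist_def)
  ultimately have "(\<Sum>\<sigma>\<in>perms n. p \<sigma> * of_bool (bid x \<sigma> ob \<le> v)) ^ (k - 1)
      \<le> (\<Sum>\<sigma>\<in>perms n. p \<sigma> * of_bool (bid x \<sigma> ob < a)) ^ (k - 1)"
    by (rule power_mono)
  also have "\<dots> \<le> adversary_share n k x p a ob"
    by (rule adversary_share_ge[OF assms(1,2)])
  finally show ?thesis .
qed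

section \<open>Upper bound against the power bids\<close>

lemma lessThan_Int_downward_closed:
  assumes "\<And>i j. i \<le> j \<Longrightarrow> P j \<Longrightarrow> P i"
  shows "{..<n} \<inter> {i. P i} = {..<card ({..<n} \<inter> {i. P i})}"
proof (cases "\<forall>i<n. P i")
  case True
  then have "{..<n} \<inter> {i. P i} = {..<n}"
    by auto
  then show ?thesis
    by simp
next
  case False
  then obtain i0 where "i0 < n" "\<not> P i0"
    by blast
  define m where "m = (LEAST i. \<not> P i)"
  have "\<not> P m"
    unfolding m_def using \<open>\<not> P i0\<close> by (rule LeastI)
  moreover have "m \<le> i0"
    unfolding m_def using \<open>\<not> P i0\<close> by (rule Least_le)
  moreover have "P i" if "i < m" for i
    using that not_less_Least unfolding m_def by blast
  ultimately have "{..<n} \<inter> {i. P i} = {..<m}"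
    using \<open>i0 < n\<close> by (auto simp: not_less) (metis assms not_le)
  then show ?thesis
    by simp
qed

lemma card_power_bids_below:
  fixes \<beta> a :: real and n :: nat
  assumes "2 \<le> k" "0 < \<beta>" "0 < a"
  defines "c \<equiv> \<lambda>j::nat. real (j + 1) ^ (k - 1) / \<beta>"
  defines "U \<equiv> card ({..<n} \<inter> {i. c i \<le> a})" and "L \<equiv> card ({..<n} \<inter> {i. c i < a})"
  shows "L \<le> U" "real U ^ (k - 1) \<le> \<beta> * a" "real U ^ (k - 1) = \<beta> * a \<Longrightarrow> L + 1 = U"
proof -
  have "strict_mono c"
    unfolding strict_mono_def c_def using assms(1,2)
    by (auto intro!: divide_strict_right_mono power_strict_mono)
  then have c_less: "c i < c j \<longleftrightarrow> i < j" and c_le: "c i \<le> c j \<longleftrightarrow> i \<le> j" for i j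
    by (auto simp: strict_mono_less strict_mono_less_eq)
  have U_set: "{..<n} \<inter> {i. c i \<le> a} = {..<U}"
    unfolding U_def using c_le by (intro lessThan_Int_downward_closed) (meson order_trans)
  have c_U: "c (U - 1) = real U ^ (k - 1) / \<beta>" if "0 < U"
    using that by (simp add: c_def)
  show "L \<le> U"
    unfolding L_def U_def by (intro card_mono) auto
  show "real U ^ (k - 1) \<le> \<beta> * a"
  proof (cases "U = 0")
    case True
    then show ?thesis
      using assms(1) mult_pos_pos[OF assms(2,3)] by (simp add: power_0_left)
  next
    case False
    then have "c (U - 1) \<le> a"
      using U_set by (metis IntD2 diff_less lessThan_iff mem_Collect_eq not_gr_zero zero_less_one)
    then show ?thesis
      using c_U False assms(2) by (simp add: divide_le_eq mult.commute)
  qed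
  assume tight: "real U ^ (k - 1) = \<beta> * a"
  have "U \<noteq> 0"
  proof
    assume "U = 0"
    then show False
      using tight assms(1-3) by (simp add: power_0_left)
  qed
  then have "c (U - 1) = a"
    using c_U tight assms(2) by simp
  then have "{..<n} \<inter> {i. c i < a} = {..<U - 1}"
    using U_set c_less \<open>U \<noteq> 0\<close> by auto
  then show "L + 1 = U"
    unfolding L_def using \<open>U \<noteq> 0\<close> by simp
qed

lemma sum_le_nat_budget_minus_1:
  fixes u :: "nat \<Rightarrow> nat" and g y :: "nat \<Rightarrow> real"
  assumes "2 \<le> n" "(\<Sum>j<n. y j) \<le> 1"
    and u_le: "\<And>j. j < n \<Longrightarrow> real (u j) \<le> real B * y j"
    and g_le: "\<And>j. j < n \<Longrightarrow> g j \<le> real (u j)"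
    and g_tight: "\<And>j. j < n \<Longrightarrow> real (u j) = real B * y j \<Longrightarrow> g j \<le> real (u j) - 1 / 2"
  shows "(\<Sum>j<n. g j) \<le> real B - 1"
proof -
  have B_y: "real B * (\<Sum>j<n. y j) \<le> real B"
    using assms(2) by (simp add: mult_left_le)
  txt \<open>Either some bound is strict, and then the integer \<open>\<Sum>j<n. u j\<close> is below \<open>B\<close>,
    or all \<open>n \<ge> 2\<close> bounds are tight and each loses \<open>1/2\<close>.\<close>
  show ?thesis
  proof (cases "\<exists>j<n. real (u j) < real B * y j")
    case True
    then have "(\<Sum>j<n. real (u j)) < (\<Sum>j<n. real B * y j)"
      using u_le by (intro sum_strict_mono_ex1) auto
    then have "real (\<Sum>j<n. u j) < real B"
      using B_y by (simp add: sum_distrib_left)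
    then have "real (\<Sum>j<n. u j) + 1 \<le> real B"
      by (metis Suc_leI of_nat_Suc of_nat_le_iff of_nat_less_iff add.commute)
    moreover have "(\<Sum>j<n. g j) \<le> (\<Sum>j<n. real (u j))"
      using g_le by (intro sum_mono) auto
    ultimately show ?thesis
      by simp
  next
    case False
    then have "g j \<le> real (u j) - 1 / 2" if "j < n" for j
      using that u_le g_tight by (meson less_eq_real_def)
    then have "(\<Sum>j<n. g j) \<le> (\<Sum>j<n. real (u j) - 1 / 2)"
      by (intro sum_mono) auto
    also have "\<dots> \<le> real B * (\<Sum>j<n. y j) - real n / 2"
      using u_le by (simp add: sum_subtractf sum_distrib_left) (intro sum_mono, simp)
    finally show ?thesis
      using B_y assms(1) by simp
  qed
qed

lemma sum_card_power_bids_below_le: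
  assumes "2 \<le> k" "2 \<le> n" "bidseq n y"
  defines "\<beta> \<equiv> \<Sum>i=1..n. real i ^ (k - 1)"
  defines "c \<equiv> \<lambda>j::nat. real (j + 1) ^ (k - 1) / \<beta>"
  shows "(\<Sum>j<n. (real (card ({..<n} \<inter> {i. c i \<le> y j})) ^ (k - 1)
                + real (card ({..<n} \<inter> {i. c i < y j})) ^ (k - 1)) / 2) \<le> \<beta> - 1"
proof -
  define Bn where "Bn = (\<Sum>i=1..n. i ^ (k - 1))"
  have \<beta>_Bn: "\<beta> = real Bn"
    unfolding \<beta>_def Bn_def by simp
  have "1 \<le> Bn"
    unfolding Bn_def using member_le_sum[of 1 "{1..n}" "\<lambda>i. i ^ (k - 1)"] assms(2) by simp
  then have "0 < \<beta>"
    using \<beta>_Bn by simp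
  define U where "U j = card ({..<n} \<inter> {i. c i \<le> y j})" for j
  define L where "L j = card ({..<n} \<inter> {i. c i < y j})" for j
  define g where "g j = (real (U j) ^ (k - 1) + real (L j) ^ (k - 1)) / 2" for j
  have "(\<Sum>j<n. g j) \<le> real Bn - 1"
  proof (rule sum_le_nat_budget_minus_1[OF assms(2), where u="\<lambda>j. U j ^ (k - 1)"])
    show "(\<Sum>j<n. y j) \<le> 1"
      using assms(3) by (simp add: bidseq_def)
    fix j assume "j < n"
    then have "0 < y j"
      using assms(3) by (simp add: bidseq_def)
    note bounds = card_power_bids_below[OF assms(1) \<open>0 < \<beta>\<close> this, of n]
    show "real (U j ^ (k - 1)) \<le> real Bn * y j"
      using bounds(2) \<beta>_Bn by (simp add: U_def c_def)
    have "real (L j) ^ (k - 1) \<le> real (U j) ^ (k - 1)"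
      using bounds(1) by (simp add: power_mono U_def L_def c_def)
    then show "g j \<le> real (U j ^ (k - 1))"
      by (simp add: g_def)
    assume "real (U j ^ (k - 1)) = real Bn * y j"
    then have "L j + 1 = U j"
      using bounds(3) \<beta>_Bn by (simp add: U_def L_def c_def)
    then have "L j ^ (k - 1) < U j ^ (k - 1)"
      using assms(1) by (intro power_strict_mono) auto
    then have "real (L j) ^ (k - 1) + 1 \<le> real (U j) ^ (k - 1)"
      by (metis Suc_leI of_nat_Suc of_nat_le_iff of_nat_power add.commute)
    then show "g j \<le> real (U j ^ (k - 1)) - 1 / 2"
      by (simp add: g_def)
  qed
  then show ?thesis
    by (simp add: g_def U_def L_def \<beta>_Bn)
qed

lemma sum_adversary_share_power_bids_le:
  assumes "2 \<le> k" "2 \<le> n" "bidseq n y" "\<tau> \<in> perms n"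
  defines "\<beta> \<equiv> \<Sum>i=1..n. real i ^ (k - 1)"
  defines "c \<equiv> \<lambda>j::nat. real (j + 1) ^ (k - 1) / \<beta>"
  shows "(\<Sum>ob<n. adversary_share n k c (unif_perm n) (bid y \<tau> ob) ob) \<le> (\<beta> - 1) / real n ^ (k - 1)"
proof -
  let ?G = "\<lambda>v. (real (card ({..<n} \<inter> {i. c i \<le> v})) ^ (k - 1)
                + real (card ({..<n} \<inter> {i. c i < v})) ^ (k - 1)) / 2"
  have "adversary_share n k c (unif_perm n) (bid y \<tau> ob) ob \<le> ?G (bid y \<tau> ob) / real n ^ (k - 1)"
    if "ob < n" for ob
    using adversary_share_unif_le[of k ob n c "bid y \<tau> ob"] assms(1) that
    by (simp add: power_divide add_divide_distrib)
  then have "(\<Sum>ob<n. adversary_share n k c (unif_perm n) (bid y \<tau> ob) ob)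
      \<le> (\<Sum>ob<n. ?G (bid y \<tau> ob) / real n ^ (k - 1))"
    by (intro sum_mono) simp
  also have "\<dots> = (\<Sum>j<n. ?G (y j)) / real n ^ (k - 1)"
    using sum_bid_permutes[of \<tau> n ?G y] assms(4) by (simp add: perms_def sum_divide_distrib[symmetric])
  also have "\<dots> \<le> (\<beta> - 1) / real n ^ (k - 1)"
    using sum_card_power_bids_below_le[OF assms(1-3)]
    by (intro divide_right_mono) (simp_all add: \<beta>_def c_def)
  finally show ?thesis .
qed

lemma expected_win_0_power_bids_le:
  assumes "2 \<le> k" "2 \<le> n" "bidseq n y" "permdist n q"
  defines "\<beta> \<equiv> \<Sum>i=1..n. real i ^ (k - 1)"
  defines "c \<equiv> \<lambda>j::nat. real (j + 1) ^ (k - 1) / \<beta>"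
  shows "expected_win n k c (unif_perm n) y q 0 \<le> (\<beta> - 1) / real n ^ (k - 1)"
proof -
  have "expected_win n k c (unif_perm n) y q 0 \<le> (\<Sum>\<tau>\<in>perms n. q \<tau> * ((\<beta> - 1) / real n ^ (k - 1)))"
    unfolding expected_win_0_eq \<beta>_def c_def
    using assms(4) sum_adversary_share_power_bids_le[OF assms(1-3)]
    by (intro sum_mono mult_left_mono) (auto simp: permdist_def)
  also have "\<dots> = (\<beta> - 1) / real n ^ (k - 1)"
    using assms(4) by (simp only: permdist_def sum_distrib_right[symmetric] mult_1)
  finally show ?thesis .
qed

section \<open>The adversary's counter-strategy\<close>

lemma convex_on_power_nonneg: "convex_on {0::real..} (\<lambda>t. t ^ m)"
proof (cases "even m")
  case True
  then show ?thesis
    by (rule convex_on_subset[OF convex_power_even]) auto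
next
  case False
  then show ?thesis
    by (rule convex_power_odd)
qed

lemma power_sum_le_card_mult_sum_power:
  fixes z :: "'a \<Rightarrow> real"
  assumes "finite S" "S \<noteq> {}" "\<And>i. i \<in> S \<Longrightarrow> 0 \<le> z i" "1 \<le> m"
  shows "(\<Sum>i\<in>S. z i) ^ m \<le> real (card S) ^ (m - 1) * (\<Sum>i\<in>S. z i ^ m)"
proof -
  define N where "N = real (card S)"
  have "0 < N"
    unfolding N_def using assms(1,2) by (simp add: card_gt_0_iff)
  have "(\<lambda>t. t ^ m) (\<Sum>i\<in>S. (1 / N) *\<^sub>R z i) \<le> (\<Sum>i\<in>S. (1 / N) * (\<lambda>t. t ^ m) (z i))"
    using \<open>0 < N\<close> assms by (intro convex_on_sum[OF assms(1,2) convex_on_power_nonneg]) (auto simp: N_def)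
  then have "((\<Sum>i\<in>S. z i) / N) ^ m \<le> (\<Sum>i\<in>S. z i ^ m) / N"
    by (simp add: sum_divide_distrib[symmetric] sum_distrib_left[symmetric] divide_inverse mult.commute)
  then have "(\<Sum>i\<in>S. z i) ^ m \<le> (\<Sum>i\<in>S. z i ^ m) / N * N ^ m"
    using \<open>0 < N\<close> by (simp add: power_divide divide_le_eq)
  also have "N ^ m = N * N ^ (m - 1)"
    using assms(4) by (simp add: power_eq_if)
  finally show ?thesis
    using \<open>0 < N\<close> by (simp add: N_def mult_ac)
qed

lemma sum_upto_card_le_sum_rank:
  fixes x :: "'a \<Rightarrow> 'b::linorder" and f :: "nat \<Rightarrow> real"
  assumes "mono f" "finite J"
  shows "(\<Sum>t=1..card J. f t) \<le> (\<Sum>j\<in>J. f (card {i\<in>J. x i \<le> x j}))"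
  using assms(2)
proof (induction "card J" arbitrary: J)
  case 0
  then show ?case
    by simp
next
  case (Suc N)
  then have "J \<noteq> {}"
    by auto
  then have "Max (x ` J) \<in> x ` J"
    using Suc.prems by (intro Max_in) auto
  then obtain m where "m \<in> J" "x m = Max (x ` J)"
    by auto
  then have top: "{i\<in>J. x i \<le> x m} = J"
    using Suc.prems by auto
  let ?J' = "J - {m}"
  have "card ?J' = N"
    using Suc.hyps(2) Suc.prems \<open>m \<in> J\<close> by simp
  then have "(\<Sum>t=1..N. f t) \<le> (\<Sum>j\<in>?J'. f (card {i\<in>?J'. x i \<le> x j}))"
    using Suc.hyps(1)[of ?J'] Suc.prems by simp
  also have "\<dots> \<le> (\<Sum>j\<in>?J'. f (card {i\<in>J. x i \<le> x j}))"
    using Suc.prems by (intro sum_mono monoD[OF assms(1)] card_mono) auto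
  moreover have "(\<Sum>j\<in>J. f (card {i\<in>J. x i \<le> x j}))
      = f (card J) + (\<Sum>j\<in>?J'. f (card {i\<in>J. x i \<le> x j}))"
    using Suc.prems \<open>m \<in> J\<close> top by (simp add: sum.remove)
  moreover have "(\<Sum>t=1..card J. f t) = (\<Sum>t=1..N. f t) + f (card J)"
    unfolding Suc.hyps(2)[symmetric] by simp
  ultimately show ?case
    by linarith
qed

lemma sum_power_ranks_ge:
  fixes x :: "nat \<Rightarrow> 'a::linorder"
  assumes "j0 < n" "\<forall>i<n. x j0 \<le> x i"
  shows "(\<Sum>i=2..n. real i ^ m) \<le> (\<Sum>j\<in>{..<n} - {j0}. real (card ({..<n} \<inter> {i. x i \<le> x j})) ^ m)"
proof -
  let ?J = "{..<n} - {j0}"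
  define f where "f t = real (t + 1) ^ m" for t
  have "mono f"
    unfolding f_def by (intro monoI power_mono) auto
  have rank: "card ({..<n} \<inter> {i. x i \<le> x j}) = card {i\<in>?J. x i \<le> x j} + 1" if "j \<in> ?J" for j
  proof -
    have "{..<n} \<inter> {i. x i \<le> x j} = insert j0 {i\<in>?J. x i \<le> x j}"
      using that assms by auto
    then show ?thesis
      by simp
  qed
  have "Suc 1 = 2" "Suc (n - 1) = n"
    using assms(1) by simp_all
  then have "(\<Sum>i=2..n. real i ^ m) = (\<Sum>i=Suc 1..Suc (n - 1). real i ^ m)"
    by (simp only:)
  also have "\<dots> = (\<Sum>t=1..card ?J. f t)"
    using assms(1) unfolding sum.shift_bounds_cl_Suc_ivl by (simp add: f_def)
  also have "\<dots> \<le> (\<Sum>j\<in>?J. f (card {i\<in>?J. x i \<le> x j}))"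
    by (rule sum_upto_card_le_sum_rank[OF \<open>mono f\<close>]) simp
  also have "\<dots> = (\<Sum>j\<in>?J. real (card ({..<n} \<inter> {i. x i \<le> x j})) ^ m)"
    by (intro sum.cong refl) (simp add: rank f_def)
  finally show ?thesis .
qed

lemma exists_overbidding_bidseq:
  assumes "bidseq n x" "0 < n"
  obtains j0 y where "j0 < n" "\<forall>i<n. x j0 \<le> x i" "bidseq n y" "\<forall>j<n. j \<noteq> j0 \<longrightarrow> x j < y j"
proof -
  have x_pos: "0 < x j" if "j < n" for j
    using assms(1) that by (simp add: bidseq_def)
  have "Min (x ` {..<n}) \<in> x ` {..<n}"
    using assms(2) by (intro Min_in) auto
  then obtain j0 where "j0 < n" "x j0 = Min (x ` {..<n})"
    by auto
  then have j0_min: "\<forall>i<n. x j0 \<le> x i"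
    by simp
  define \<epsilon> where "\<epsilon> = x j0 / (2 * real n)"
  have "0 < \<epsilon>" "real n * \<epsilon> = x j0 / 2"
    using x_pos[OF \<open>j0 < n\<close>] assms(2) by (simp_all add: \<epsilon>_def)
  define y where "y j = x j + \<epsilon> - (if j = j0 then real n * \<epsilon> else 0)" for j
  have "0 < y j" if "j < n" for j
    using x_pos[OF that] \<open>0 < \<epsilon>\<close> \<open>real n * \<epsilon> = x j0 / 2\<close> by (cases "j = j0") (simp_all add: y_def)
  moreover have "(\<Sum>j<n. y j) = (\<Sum>j<n. x j)"
    using \<open>j0 < n\<close> by (simp add: y_def sum.distrib sum_subtractf)
  ultimately have "bidseq n y"
    using assms(1) by (simp add: bidseq_def)
  moreover have "\<forall>j<n. j \<noteq> j0 \<longrightarrow> x j < y j"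
    using \<open>0 < \<epsilon>\<close> by (simp add: y_def)
  ultimately show ?thesis
    using that \<open>j0 < n\<close> j0_min by blast
qed

lemma expected_win_0_unif:
  "expected_win n k x p y (unif_perm n) 0
     = (\<Sum>ob<n. \<Sum>j<n. adversary_share n k x p (y j) ob) / real n"
proof -
  have "expected_win n k x p y (unif_perm n) 0
      = (\<Sum>ob<n. \<Sum>\<tau>\<in>perms n. unif_perm n \<tau> * adversary_share n k x p (bid y \<tau> ob) ob)"
    unfolding expected_win_0_eq by (simp add: sum_distrib_left sum.swap[of _ "perms n"])
  also have "\<dots> = (\<Sum>ob<n. (\<Sum>j<n. adversary_share n k x p (y j) ob) / real n)"
    by (intro sum.cong refl) (simp add: sum_unif_perm_bid[of _ n "\<lambda>a. adversary_share n k x p a _"])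
  finally show ?thesis
    by (simp add: sum_divide_distrib)
qed

lemma power_card_le_sum_power_prob_bid_le:
  assumes "permdist n p" "0 < n" "1 \<le> m"
  shows "real (card ({..<n} \<inter> {i. x i \<le> v})) ^ m
    \<le> real n ^ (m - 1) * (\<Sum>ob<n. (\<Sum>\<sigma>\<in>perms n. p \<sigma> * of_bool (bid x \<sigma> ob \<le> v)) ^ m)"
proof -
  have "real (card ({..<n} \<inter> {i. x i \<le> v}))
      = (\<Sum>ob<n. \<Sum>\<sigma>\<in>perms n. p \<sigma> * of_bool (bid x \<sigma> ob \<le> v))"
    using sum_bid_permdist[OF assms(1), of "\<lambda>a. of_bool (a \<le> v)" x] by simp
  moreover have "0 \<le> (\<Sum>\<sigma>\<in>perms n. p \<sigma> * of_bool (bid x \<sigma> ob \<le> v))" for ob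
    using assms(1) by (intro sum_nonneg) (simp add: permdist_def)
  ultimately show ?thesis
    using power_sum_le_card_mult_sum_power[where S="{..<n}" and m=m
        and z="\<lambda>ob. \<Sum>\<sigma>\<in>perms n. p \<sigma> * of_bool (bid x \<sigma> ob \<le> v)"] assms(2,3)
    by (simp add: lessThan_empty_iff)
qed

lemma expected_win_0_overbid_ge:
  assumes "2 \<le> k" "2 \<le> n" "bidseq n x" "permdist n p"
  defines "\<beta> \<equiv> \<Sum>i=1..n. real i ^ (k - 1)"
  shows "\<exists>y. bidseq n y \<and> (\<beta> - 1) / real n ^ (k - 1) \<le> expected_win n k x p y (unif_perm n) 0"
proof -
  have "0 < n"
    using assms(2) by simp
  obtain j0 y where j0: "j0 < n" "\<forall>i<n. x j0 \<le> x i" and "bidseq n y"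
    and overbid: "\<forall>j<n. j \<noteq> j0 \<longrightarrow> x j < y j"
    by (rule exists_overbidding_bidseq[OF assms(3) \<open>0 < n\<close>])
  obtain k' where k': "k = k' + 2"
    using assms(1) by (metis add.commute le_Suc_ex)
  let ?J = "{..<n} - {j0}"
  let ?N = "\<lambda>j. real (card ({..<n} \<inter> {i. x i \<le> x j}))"
  let ?H = "\<lambda>ob j. \<Sum>\<sigma>\<in>perms n. p \<sigma> * of_bool (bid x \<sigma> ob \<le> x j)"
  let ?A = "\<lambda>ob j. adversary_share n k x p (y j) ob"
  have "{1..n} = insert 1 {2..n}"
    using assms(2) by auto
  then have "\<beta> - 1 = (\<Sum>i=2..n. real i ^ (k - 1))"
    unfolding \<beta>_def by simp
  then have "(\<beta> - 1) / real n ^ (k - 1) \<le> (\<Sum>j\<in>?J. ?N j ^ (k - 1)) / real n ^ (k - 1)"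
    using sum_power_ranks_ge[OF j0] by (intro divide_right_mono) auto
  also have "\<dots> \<le> (\<Sum>j\<in>?J. \<Sum>ob<n. ?H ob j ^ (k - 1)) / real n"
  proof -
    have "?N j ^ (k - 1) \<le> real n ^ k' * (\<Sum>ob<n. ?H ob j ^ (k - 1))" for j
      using power_card_le_sum_power_prob_bid_le[OF assms(4) \<open>0 < n\<close>, of "k - 1" x "x j"] k' by simp
    then have "(\<Sum>j\<in>?J. ?N j ^ (k - 1)) \<le> real n ^ k' * (\<Sum>j\<in>?J. \<Sum>ob<n. ?H ob j ^ (k - 1))"
      by (simp add: sum_distrib_left sum_mono)
    then show ?thesis
      using \<open>0 < n\<close> by (simp add: k' field_simps)
  qed
  also have "\<dots> \<le> (\<Sum>j\<in>?J. \<Sum>ob<n. ?A ob j) / real n"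
    using overbid assms(1,4)
    by (intro divide_right_mono sum_mono adversary_share_overbid_ge) auto
  also have "\<dots> \<le> (\<Sum>j<n. \<Sum>ob<n. ?A ob j) / real n"
    using adversary_share_nonneg[OF assms(4)]
    by (intro divide_right_mono sum_mono2 sum_nonneg) auto
  also have "\<dots> = expected_win n k x p y (unif_perm n) 0"
    unfolding expected_win_0_unif by (subst sum.swap) (rule refl)
  finally show ?thesis
    using \<open>bidseq n y\<close> by blast
qed

theorem theorem4p5:
  fixes k n :: nat
  assumes "k \<ge> 2" and "n \<ge> k"
  defines "\<beta> \<equiv> (\<Sum>i=1..n. real i ^ (k - 1))"
  defines "c \<equiv> (\<lambda>j::nat. real (j + 1) ^ (k - 1) / \<beta>)"
  defines "B \<equiv> (1 / real (k - 1)) * (real n - (\<beta> - 1) / real n ^ (k - 1))"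
  shows "(\<forall>y q. bidseq n y \<and> permdist n q \<longrightarrow>
            (\<forall>d\<in>{1..k-1}. expected_win n k c (unif_perm n) y q d \<ge> B))
       \<and> (\<forall>x p. bidseq n x \<and> permdist n p \<longrightarrow>
            (\<exists>y q. bidseq n y \<and> permdist n q \<and>
               (\<forall>d\<in>{1..k-1}. expected_win n k x p y q d \<le> B)))"
proof -
  have "2 \<le> n"
    using assms(1,2) by simp
  have "B \<le> expected_win n k c (unif_perm n) y q d"
    if "bidseq n y" "permdist n q" "d \<in> {1..k-1}" for y q d
  proof -
    have "expected_win n k c (unif_perm n) y q 0 \<le> (\<beta> - 1) / real n ^ (k - 1)"
      using expected_win_0_power_bids_le[OF assms(1) \<open>2 \<le> n\<close> that(1,2)] by (simp add: \<beta>_def c_def)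
    then show ?thesis
      using expected_win_eq_adversary[OF assms(1) unif_permdist that(2,3)] assms(1)
      by (simp add: B_def divide_right_mono)
  qed
  moreover have "\<exists>y q. bidseq n y \<and> permdist n q \<and> (\<forall>d\<in>{1..k-1}. expected_win n k x p y q d \<le> B)"
    if x_p: "bidseq n x" "permdist n p" for x p
  proof -
    obtain y where "bidseq n y" and "(\<beta> - 1) / real n ^ (k - 1) \<le> expected_win n k x p y (unif_perm n) 0"
      using expected_win_0_overbid_ge[OF assms(1) \<open>2 \<le> n\<close> x_p] by (auto simp: \<beta>_def)
    then have "\<forall>d\<in>{1..k-1}. expected_win n k x p y (unif_perm n) d \<le> B"
      using expected_win_eq_adversary[OF assms(1) x_p(2) unif_permdist] assms(1)
      by (simp add: B_def divide_right_mono)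
    then show ?thesis
      using \<open>bidseq n y\<close> unif_permdist by blast
  qed
  ultimately show ?thesis
    by blast
qed

end
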